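(* Let $E^+$ be a valuation ring of finite rank with fraction field $E$, and let $M$ be a torsionfree $E^+$-module such that $M\otimes_{E^+}E$ is a finite-dimensional $E$-vector space. Then the $E^+/p$-module $M/p$ is a countable filtered colimit of free $E^+/p$-modules of rank at most $\dim_E(M\otimes_{E^+}E)$. In particular, $M/p$ has projective dimension at most $1$ as an $E^+/p$-module.
   Context: $p$ is a prime. The rank of a valuation ring is its number of nonzero prime ideals. *)

theory Defs
  imports Main "HOL.Modules" "HOL-Computational_Algebra.Fraction_Field" "HOL-Computational_Algebra.Primes"
begin

(* The valuation ring E^+ is modelled as a type 'r :: idom; its fraction field E is 'r fract. *)

definition valuation_ring :: "'r::idom itself \<Rightarrow> bool" where
  "valuation_ring _ \<longleftrightarrow>
     (\<forall>x :: 'r fract. (\<exists>a. x = Fract a 1) \<or> (\<exists>a. inverse x = Fract a 1))"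

definition ring_ideal :: "'r::comm_ring_1 set \<Rightarrow> bool" where
  "ring_ideal I \<longleftrightarrow> 0 \<in> I \<and> (\<forall>x\<in>I. \<forall>y\<in>I. x + y \<in> I) \<and> (\<forall>r. \<forall>x\<in>I. r * x \<in> I)"

definition prime_ideal :: "'r::comm_ring_1 set \<Rightarrow> bool" where
  "prime_ideal P \<longleftrightarrow> ring_ideal P \<and> P \<noteq> UNIV \<and> (\<forall>a b. a * b \<in> P \<longrightarrow> a \<in> P \<or> b \<in> P)"

text \<open>rank = number of nonzero prime ideals; finite rank means this set is finite\<close>
definition finite_rank :: "'r::comm_ring_1 itself \<Rightarrow> bool" where
  "finite_rank _ \<longleftrightarrow> finite {P :: 'r set. prime_ideal P \<and> P \<noteq> {0}}"

definition torsionfree :: "('r::comm_ring_1 \<Rightarrow> 'm::ab_group_add \<Rightarrow> 'm) \<Rightarrow> bool" where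
  "torsionfree scale \<longleftrightarrow> (\<forall>r m. scale r m = 0 \<longrightarrow> r = 0 \<or> m = 0)"

text \<open>B (finite, E^+-linearly independent in M) gives a basis {b \<otimes> 1} of M \<otimes> E:
  every element of M becomes a combination of B after multiplying by a nonzero scalar.\<close>
definition tensor_basis :: "('r::comm_ring_1 \<Rightarrow> 'm::ab_group_add \<Rightarrow> 'm) \<Rightarrow> 'm set \<Rightarrow> bool" where
  "tensor_basis scale B \<longleftrightarrow> finite B \<and> \<not> module.dependent scale B \<and>
     (\<forall>m. \<exists>r. r \<noteq> 0 \<and> scale r m \<in> module.span scale B)"

definition in_pM :: "('r::comm_ring_1 \<Rightarrow> 'm::ab_group_add \<Rightarrow> 'm) \<Rightarrow> nat \<Rightarrow> 'm \<Rightarrow> bool" where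
  "in_pM scale p m \<longleftrightarrow> (\<exists>m'. m = scale (of_nat p) m')"

text \<open>M/p is the colimit (in E^+/p-modules) of a countable directed system (index set I \<subseteq> nat,
  preorder le) of free E^+/p-modules F_i = (E^+/p)^(k i) with k i \<le> d.
  Transition maps F_i \<rightarrow> F_j are given by matrices A i j (entries taken mod p):
  e_a \<mapsto> \<Sum>_b A i j a b e_b.  The cocone maps F_i \<rightarrow> M/p send e_a to the class of g i a.
  The colimit property is the standard explicit one for directed colimits of modules:
  jointly surjective, and an element of F_i mapping to 0 dies in some F_j, j \<ge> i.\<close>
definition free_countable_filtered_colimit ::
    "('r::comm_ring_1 \<Rightarrow> 'm::ab_group_add \<Rightarrow> 'm) \<Rightarrow> nat \<Rightarrow> nat \<Rightarrow> bool" where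
  "free_countable_filtered_colimit scale p d \<longleftrightarrow>
    (\<exists>(I::nat set) (le::nat \<Rightarrow> nat \<Rightarrow> bool) (k::nat \<Rightarrow> nat)
       (A::nat \<Rightarrow> nat \<Rightarrow> nat \<Rightarrow> nat \<Rightarrow> 'r) (g::nat \<Rightarrow> nat \<Rightarrow> 'm).
      I \<noteq> {} \<and>
      (\<forall>i\<in>I. le i i) \<and>
      (\<forall>i\<in>I. \<forall>j\<in>I. \<forall>l\<in>I. le i j \<longrightarrow> le j l \<longrightarrow> le i l) \<and>
      (\<forall>i\<in>I. \<forall>j\<in>I. \<exists>l\<in>I. le i l \<and> le j l) \<and>
      (\<forall>i\<in>I. k i \<le> d) \<and>
      (\<forall>i\<in>I. \<forall>a<k i. \<forall>b<k i. of_nat p dvd (A i i a b - (if a = b then 1 else 0))) \<and>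
      (\<forall>i\<in>I. \<forall>j\<in>I. \<forall>l\<in>I. le i j \<longrightarrow> le j l \<longrightarrow>
         (\<forall>a<k i. \<forall>c<k l. of_nat p dvd (A i l a c - (\<Sum>b<k j. A i j a b * A j l b c)))) \<and>
      (\<forall>i\<in>I. \<forall>j\<in>I. le i j \<longrightarrow>
         (\<forall>a<k i. in_pM scale p (g i a - (\<Sum>b<k j. scale (A i j a b) (g j b))))) \<and>
      (\<forall>m. \<exists>i\<in>I. \<exists>c::nat \<Rightarrow> 'r. in_pM scale p (m - (\<Sum>a<k i. scale (c a) (g i a)))) \<and>
      (\<forall>i\<in>I. \<forall>c::nat \<Rightarrow> 'r. in_pM scale p (\<Sum>a<k i. scale (c a) (g i a)) \<longrightarrow>
         (\<exists>j\<in>I. le i j \<and> (\<forall>b<k j. of_nat p dvd (\<Sum>a<k i. c a * A i j a b)))))"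

end

theory Submission
  imports "HOL-Library.Countable_Set" Defs
begin

text \<open>Coordinates with respect to \<open>B\<close> embed \<open>M\<close> into \<open>E\<^sup>d\<close>, and \<open>M\<close> is filtered by the submodules
  \<open>M\<^sub>k\<close> of elements whose coordinates from the \<open>k\<close>-th on vanish. The \<open>k\<close>-th coordinate embeds
  \<open>M\<^sub>k\<^sub>+\<^sub>1/M\<^sub>k\<close> into \<open>E\<close>, and every \<open>E\<^sup>+\<close>-submodule of \<open>E\<close> is countably generated because, for a
  valuation ring of finite rank, every set of nonzero elements of \<open>E\<close> has a countable coinitial
  subset for the valuation (induction over the finitely many convex subgroups of the value group,
  whose successive quotients are archimedean). So \<open>M\<close> is countably generated, hence the union of
  the chain of its submodules generated by finitely many generators. Gaussian elimination over
  \<open>E\<^sup>+\<close>, pivoting on a coordinate of least valuation, brings each of these into echelon form with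
  respect to the coordinates, so it is free of rank at most \<open>d\<close>. Reducing the chain mod \<open>p\<close>
  gives the colimit presentation.\<close>

section \<open>Valuation rings and their convex subgroups\<close>

definition integral_fract :: "'r::idom fract \<Rightarrow> bool" where
  "integral_fract x \<longleftrightarrow> (\<exists>a. x = Fract a 1)"

lemma integral_fract_0 [simp]: "integral_fract 0"
  and integral_fract_1 [simp]: "integral_fract 1"
  and integral_fract_Fract [simp]: "integral_fract (Fract a 1)"
  unfolding integral_fract_def by (auto simp: Zero_fract_def One_fract_def)

lemma integral_fract_mult [intro]: "integral_fract x \<Longrightarrow> integral_fract y \<Longrightarrow> integral_fract (x * y)"
  and integral_fract_add [intro]: "integral_fract x \<Longrightarrow> integral_fract y \<Longrightarrow> integral_fract (x + y)"
  unfolding integral_fract_def by auto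

lemma integral_fract_power [intro]: "integral_fract x \<Longrightarrow> integral_fract (x ^ n)"
  by (induct n) auto

lemma Fract_1_eq_0_iff [simp]: "Fract a 1 = 0 \<longleftrightarrow> a = 0"
  by (simp add: Zero_fract_def eq_fract)

lemma valuation_ringD:
  "valuation_ring TYPE('r::idom) \<Longrightarrow> integral_fract (x::'r fract) \<or> integral_fract (inverse x)"
  unfolding valuation_ring_def integral_fract_def by blast

lemma valuation_ring_divide_cases:
  "valuation_ring TYPE('r::idom) \<Longrightarrow> \<not> integral_fract (x / y :: 'r fract) \<Longrightarrow> integral_fract (y / x)"
  using valuation_ringD[of "x / y"] by simp

text \<open>A subgroup of \<open>E\<^sup>\<times>\<close> that is convex for the divisibility order of \<open>E\<^sup>+\<close>; these are the
  preimages of the convex subgroups of the value group.\<close>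
definition convex_subgroup :: "'r::idom fract set \<Rightarrow> bool" where
  "convex_subgroup D \<longleftrightarrow> 0 \<notin> D \<and> 1 \<in> D \<and> (\<forall>x\<in>D. \<forall>y\<in>D. x * y \<in> D) \<and> (\<forall>x\<in>D. inverse x \<in> D) \<and>
     (\<forall>x\<in>D. \<forall>y. y \<noteq> 0 \<longrightarrow> integral_fract y \<longrightarrow> integral_fract (x / y) \<longrightarrow> y \<in> D)"

context
  fixes D :: "'r::idom fract set"
  assumes D: "convex_subgroup D"
begin

lemma convex_subgroup_nonzero: "x \<in> D \<Longrightarrow> x \<noteq> 0"
  and convex_subgroup_one: "1 \<in> D"
  and convex_subgroup_mult: "x \<in> D \<Longrightarrow> y \<in> D \<Longrightarrow> x * y \<in> D"
  and convex_subgroup_inverse: "x \<in> D \<Longrightarrow> inverse x \<in> D"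
  and convex_subgroup_convex:
    "x \<in> D \<Longrightarrow> y \<noteq> 0 \<Longrightarrow> integral_fract y \<Longrightarrow> integral_fract (x / y) \<Longrightarrow> y \<in> D"
  using D unfolding convex_subgroup_def by auto

lemma convex_subgroup_divide: "x \<in> D \<Longrightarrow> y \<in> D \<Longrightarrow> x / y \<in> D"
  by (simp add: convex_subgroup_inverse convex_subgroup_mult divide_inverse)

lemma convex_subgroup_inverse_iff: "inverse x \<in> D \<longleftrightarrow> x \<in> D"
  by (metis convex_subgroup_inverse inverse_inverse_eq)

lemma convex_subgroup_power: "x \<in> D \<Longrightarrow> x ^ n \<in> D"
  by (induct n) (auto simp: convex_subgroup_one convex_subgroup_mult)

lemma convex_subgroup_unit:
  "x \<noteq> 0 \<Longrightarrow> integral_fract x \<Longrightarrow> integral_fract (inverse x) \<Longrightarrow> x \<in> D"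
  using convex_subgroup_convex[of 1 x] by (simp add: convex_subgroup_one inverse_eq_divide)

end

lemma convex_subgroup_integral_representative:
  assumes "valuation_ring TYPE('r::idom)" "convex_subgroup D" "convex_subgroup D'"
    and "(x :: 'r fract) \<in> D" "x \<notin> D'"
  shows "\<exists>y. y \<in> D \<and> y \<notin> D' \<and> integral_fract y"
  using valuation_ringD[OF assms(1), of x] assms(4,5)
    convex_subgroup_inverse_iff[OF assms(2)] convex_subgroup_inverse_iff[OF assms(3)] by blast

lemma convex_subgroup_add_cases:
  assumes VR: "valuation_ring TYPE('r::idom)" and D: "convex_subgroup (D::'r fract set)"
    and "integral_fract x" "integral_fract y" "x + y \<in> D"
  shows "x \<in> D \<or> y \<in> D"
proof -
  have "x \<in> D \<or> y \<in> D" if "integral_fract (y / x)" "integral_fract x" "x + y \<in> D" for x y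
  proof (cases "x = 0")
    case False
    then have "(x + y) / x = 1 + y / x" by (simp add: field_simps)
    then have "integral_fract ((x + y) / x)" using that by auto
    then show ?thesis using convex_subgroup_convex[OF D \<open>x + y \<in> D\<close> False] that by blast
  qed (use that in simp)
  from this[of x y] this[of y x] show ?thesis
    using valuation_ring_divide_cases[OF VR, of y x] assms(3-) by (auto simp: add.commute)
qed

lemma convex_subgroup_linear:
  assumes VR: "valuation_ring TYPE('r::idom)"
    and D1: "convex_subgroup (D1::'r fract set)" and D2: "convex_subgroup D2"
  shows "D1 \<subseteq> D2 \<or> D2 \<subseteq> D1"
proof (rule ccontr)
  assume "\<not> ?thesis"
  then obtain x y where "x \<in> D1" "x \<notin> D2" "y \<in> D2" "y \<notin> D1" by blast
  then obtain x' y' where x': "x' \<in> D1" "x' \<notin> D2" "integral_fract x'"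
    and y': "y' \<in> D2" "y' \<notin> D1" "integral_fract y'"
    using convex_subgroup_integral_representative[OF VR] D1 D2 by metis
  have "x' \<noteq> 0" "y' \<noteq> 0" using x' y' D1 D2 convex_subgroup_nonzero by auto
  then show False
    using convex_subgroup_convex[OF D1 x'(1)] convex_subgroup_convex[OF D2 y'(1)] x' y'
      valuation_ring_divide_cases[OF VR, of x' y'] by blast
qed

lemma convex_subgroup_nonzero_fracts: "convex_subgroup {x::'r::idom fract. x \<noteq> 0}"
  unfolding convex_subgroup_def by auto

definition unit_fracts :: "'r::idom fract set" where
  "unit_fracts = {x. x \<noteq> 0 \<and> integral_fract x \<and> integral_fract (inverse x)}"

lemma convex_subgroup_unit_fracts: "convex_subgroup (unit_fracts :: 'r::idom fract set)"
  unfolding convex_subgroup_def unit_fracts_def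
proof (intro conjI ballI allI impI)
  fix x y :: "'r fract"
  assume x: "x \<in> {x. x \<noteq> 0 \<and> integral_fract x \<and> integral_fract (inverse x)}"
    and y: "y \<noteq> 0" "integral_fract y" "integral_fract (x / y)"
  have "integral_fract (inverse x * (x / y))" using x y by (intro integral_fract_mult) auto
  moreover have "inverse x * (x / y) = inverse y" using x by (simp add: divide_inverse)
  ultimately have "integral_fract (inverse y)" by metis
  with y show "y \<in> {x. x \<noteq> 0 \<and> integral_fract x \<and> integral_fract (inverse x)}" by blast
qed (auto simp: inverse_mult_distrib)

lemma unit_fracts_subset: "convex_subgroup D \<Longrightarrow> unit_fracts \<subseteq> D"
  unfolding unit_fracts_def using convex_subgroup_unit by blast

definition outside_ideal :: "'r::idom fract set \<Rightarrow> 'r set" where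
  "outside_ideal D = {a. Fract a 1 \<notin> D}"

lemma prime_ideal_outside_ideal:
  assumes VR: "valuation_ring TYPE('r::idom)" and D: "convex_subgroup (D::'r fract set)"
  shows "prime_ideal (outside_ideal D)"
proof -
  have add: "a + b \<in> outside_ideal D" if a: "a \<in> outside_ideal D" and b: "b \<in> outside_ideal D" for a b
    using a b convex_subgroup_add_cases[OF VR D, of "Fract a 1" "Fract b 1"]
    by (auto simp: outside_ideal_def)
  have mult: "r * x \<in> outside_ideal D" if x: "x \<in> outside_ideal D" for r x
  proof (rule ccontr)
    assume "r * x \<notin> outside_ideal D"
    then have rx: "Fract r 1 * Fract x 1 \<in> D" by (simp add: outside_ideal_def)
    then have "x \<noteq> 0" using convex_subgroup_nonzero[OF D] by fastforce
    moreover have "Fract r 1 * Fract x 1 / Fract x 1 = Fract r 1" using \<open>x \<noteq> 0\<close> by (simp add: eq_fract)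
    ultimately have "Fract x 1 \<in> D"
      using convex_subgroup_convex[OF D rx, of "Fract x 1"] by (metis Fract_1_eq_0_iff integral_fract_Fract)
    then show False using x by (simp add: outside_ideal_def)
  qed
  have "0 \<in> outside_ideal D" "1 \<notin> outside_ideal D"
    using convex_subgroup_nonzero[OF D] convex_subgroup_one[OF D]
    by (auto simp: outside_ideal_def Zero_fract_def One_fract_def)
  moreover have "a \<in> outside_ideal D \<or> b \<in> outside_ideal D" if "a * b \<in> outside_ideal D" for a b
    using that convex_subgroup_mult[OF D, of "Fract a 1" "Fract b 1"] by (auto simp: outside_ideal_def)
  ultimately show ?thesis
    unfolding prime_ideal_def ring_ideal_def using add mult by blast
qed

lemma outside_ideal_nonzero:
  assumes VR: "valuation_ring TYPE('r::idom)" and D: "convex_subgroup (D::'r fract set)"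
    and ne: "D \<noteq> {x. x \<noteq> 0}"
  shows "outside_ideal D \<noteq> {0}"
proof -
  obtain x where "x \<notin> D" "x \<noteq> 0" using ne convex_subgroup_nonzero[OF D] by blast
  then obtain y where "y \<notin> D" "y \<noteq> 0" "integral_fract y"
    using convex_subgroup_integral_representative[OF VR convex_subgroup_nonzero_fracts D, of x]
    by auto
  then show ?thesis by (auto simp: integral_fract_def outside_ideal_def)
qed

lemma outside_ideal_inj:
  assumes VR: "valuation_ring TYPE('r::idom)"
    and D1: "convex_subgroup (D1::'r fract set)" and D2: "convex_subgroup D2"
    and eq: "outside_ideal D1 = outside_ideal D2"
  shows "D1 = D2"
proof -
  have Fract_iff: "Fract a 1 \<in> D1 \<longleftrightarrow> Fract a 1 \<in> D2" for a
    using eq unfolding outside_ideal_def by blast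
  show ?thesis
  proof (intro set_eqI)
    fix x :: "'r fract"
    obtain a where "x = Fract a 1 \<or> inverse x = Fract a 1"
      using valuation_ringD[OF VR, of x] unfolding integral_fract_def by blast
    then show "x \<in> D1 \<longleftrightarrow> x \<in> D2"
      using Fract_iff convex_subgroup_inverse_iff[OF D1, of x] convex_subgroup_inverse_iff[OF D2, of x]
      by auto
  qed
qed

lemma finite_convex_subgroups:
  assumes VR: "valuation_ring TYPE('r::idom)" and FR: "finite_rank TYPE('r)"
  shows "finite {D :: 'r fract set. convex_subgroup D}"
proof -
  let ?C = "{D :: 'r fract set. convex_subgroup D \<and> D \<noteq> {x. x \<noteq> 0}}"
  have "inj_on outside_ideal ?C"
    by (intro inj_onI) (use outside_ideal_inj[OF VR] in blast)
  moreover have "outside_ideal ` ?C \<subseteq> {P. prime_ideal P \<and> P \<noteq> {0}}"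
    using prime_ideal_outside_ideal[OF VR] outside_ideal_nonzero[OF VR] by blast
  ultimately have "finite ?C"
    using FR unfolding finite_rank_def by (meson finite_imageD finite_subset)
  then have "finite (insert {x. x \<noteq> 0} ?C)" by simp
  then show ?thesis by (rule finite_subset[rotated]) blast
qed

lemma convex_subgroup_bounded_by_powers:
  assumes g: "integral_fract \<gamma>"
  shows "convex_subgroup {x. x \<noteq> 0 \<and> (\<exists>N. integral_fract (\<gamma>^N / x) \<and> integral_fract (\<gamma>^N * x))}"
    (is "convex_subgroup ?H")
  unfolding convex_subgroup_def
proof (intro conjI ballI allI impI)
  show "0 \<notin> ?H" by simp
  show "1 \<in> ?H" using g by (auto intro!: exI[of _ 0])
next
  fix x y assume "x \<in> ?H" "y \<in> ?H"
  then obtain N1 N2 where "x \<noteq> 0" "y \<noteq> 0"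
    and 1: "integral_fract (\<gamma>^N1 / x)" "integral_fract (\<gamma>^N1 * x)"
    and 2: "integral_fract (\<gamma>^N2 / y)" "integral_fract (\<gamma>^N2 * y)" by blast
  moreover have "\<gamma>^(N1+N2) / (x * y) = (\<gamma>^N1 / x) * (\<gamma>^N2 / y)"
    "\<gamma>^(N1+N2) * (x * y) = (\<gamma>^N1 * x) * (\<gamma>^N2 * y)"
    by (simp_all add: power_add ac_simps)
  ultimately show "x * y \<in> ?H" by (metis (mono_tags, lifting) integral_fract_mult mem_Collect_eq no_zero_divisors)
next
  fix x assume "x \<in> ?H"
  then show "inverse x \<in> ?H" by (auto simp: divide_inverse)
next
  fix x y assume "x \<in> ?H" and y: "y \<noteq> 0" "integral_fract y" "integral_fract (x / y)"
  then obtain N where "x \<noteq> 0" "integral_fract (\<gamma>^N / x)" by blast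
  moreover have "\<gamma>^N / y = (\<gamma>^N / x) * (x / y)" using \<open>x \<noteq> 0\<close> by simp
  ultimately show "y \<in> ?H"
    using y g by (metis (mono_tags, lifting) integral_fract_mult integral_fract_power mem_Collect_eq)
qed

text \<open>If \<open>D'\<close> is the largest convex subgroup below \<open>D\<close>, then \<open>D/D'\<close> is archimedean: every \<open>x \<in> D\<close> is
  bounded by a power of any \<open>\<gamma> \<in> D - D'\<close>.\<close>
lemma convex_subgroup_archimedean:
  assumes VR: "valuation_ring TYPE('r::idom)"
    and D: "convex_subgroup (D::'r fract set)" and D': "convex_subgroup D'"
    and below: "\<And>E. convex_subgroup E \<Longrightarrow> E \<subset> D \<Longrightarrow> E \<subseteq> D'"
    and g: "\<gamma> \<in> D" "\<gamma> \<notin> D'" "integral_fract \<gamma>" and x: "x \<in> D"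
  shows "\<exists>N. integral_fract (\<gamma>^N / x) \<and> integral_fract (\<gamma>^N * x)"
proof -
  define H where "H = {x. x \<noteq> 0 \<and> (\<exists>N. integral_fract (\<gamma>^N / x) \<and> integral_fract (\<gamma>^N * x))}"
  have H: "convex_subgroup H"
    unfolding H_def using convex_subgroup_bounded_by_powers[OF g(3)] .
  have "\<gamma> \<in> H"
    unfolding H_def using g convex_subgroup_nonzero[OF D] by (auto intro!: exI[of _ 1])
  have "H \<subseteq> D"
  proof
    fix y assume "y \<in> H"
    then obtain N where N: "integral_fract (\<gamma>^N / y)" "integral_fract (\<gamma>^N * y)" and "y \<noteq> 0"
      unfolding H_def by blast
    have "\<gamma>^N \<in> D" using convex_subgroup_power[OF D g(1)] .
    moreover have "\<gamma>^N / inverse y = \<gamma>^N * y" by (simp add: divide_inverse)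
    ultimately show "y \<in> D"
      using valuation_ringD[OF VR, of y] convex_subgroup_convex[OF D] N \<open>y \<noteq> 0\<close>
        convex_subgroup_inverse_iff[OF D, of y] by (metis inverse_nonzero_iff_nonzero)
  qed
  then have "H = D" using below[OF H] \<open>\<gamma> \<in> H\<close> g(2) by blast
  then show ?thesis using x unfolding H_def by blast
qed

lemma exists_least_integral_power:
  assumes "integral_fract (\<rho> * \<gamma>^n)" "\<not> integral_fract (\<rho> / \<gamma>)"
  shows "\<exists>n. integral_fract (\<rho> * \<gamma>^n) \<and> \<not> integral_fract (\<rho> * \<gamma>^n / \<gamma>)"
proof -
  define n0 where "n0 = (LEAST n. integral_fract (\<rho> * \<gamma>^n))"
  have "integral_fract (\<rho> * \<gamma>^n0)"
    unfolding n0_def by (rule LeastI[of _ n]) (rule assms(1))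
  moreover have "\<not> integral_fract (\<rho> * \<gamma>^n0 / \<gamma>)"
  proof (cases n0)
    case (Suc m)
    then have "m < n0" by simp
    then have "\<not> integral_fract (\<rho> * \<gamma>^m)" unfolding n0_def by (rule not_less_Least)
    moreover have "\<rho> * \<gamma>^n0 / \<gamma> = \<rho> * \<gamma>^m \<or> \<gamma> = 0" using Suc by auto
    ultimately show ?thesis using assms(2) by auto
  qed (use assms(2) in simp)
  ultimately show ?thesis by blast
qed

section \<open>Countable coinitial subsets\<close>

text \<open>Only meaningful for \<open>0 \<notin> S\<close>, since \<open>s / 0 = 0\<close> is integral.\<close>
definition coinitial :: "'r::idom fract set \<Rightarrow> 'r fract set \<Rightarrow> bool" where
  "coinitial C S \<longleftrightarrow> C \<subseteq> S \<and> (\<forall>s\<in>S. \<exists>c\<in>C. integral_fract (s / c))"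

lemma integral_fract_divide_squeeze:
  assumes VR: "valuation_ring TYPE('r::idom)"
    and nz: "s \<noteq> 0" "s' \<noteq> 0" "t \<noteq> 0" "\<gamma> \<noteq> 0"
    and "integral_fract ((s / s')^N / \<gamma>)" "\<not> integral_fract ((b / s')^N / \<gamma>^M * \<gamma>^n / \<gamma>)"
    and "integral_fract ((b / t)^N / \<gamma>^M * \<gamma>^n :: 'r fract)"
  shows "integral_fract (s / t)"
proof (rule ccontr)
  assume "\<not> integral_fract (s / t)"
  then have "integral_fract (t / s)" by (rule valuation_ring_divide_cases[OF VR])
  then have "integral_fract ((t / s)^N * ((b / t)^N / \<gamma>^M * \<gamma>^n) * ((s / s')^N / \<gamma>))"
    using integral_fract_mult[OF integral_fract_mult[OF integral_fract_power assms(8)] assms(6)] by blast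
  moreover have "(t / s)^N * ((b / t)^N / \<gamma>^M * \<gamma>^n) * ((s / s')^N / \<gamma>) = (b / s')^N / \<gamma>^M * \<gamma>^n / \<gamma>"
    using nz by (simp add: power_divide field_simps)
  ultimately show False using assms(7) by metis
qed

text \<open>Writing \<open>v\<close> for the valuation: if \<open>v(s') < v(s)\<close> and \<open>D/D'\<close> is archimedean, there are \<open>n, M, N\<close>
  with \<open>N v(s') \<le> N v(b) + (n - M) v(\<gamma>) < N v(s)\<close>; take \<open>N\<close> with \<open>N (v(s) - v(s')) \<ge> v(\<gamma>)\<close> and
  then \<open>n\<close> least.\<close>
lemma exists_power_bound_between:
  assumes VR: "valuation_ring TYPE('r::idom)"
    and D: "convex_subgroup (D::'r fract set)" and D': "convex_subgroup D'"
    and below: "\<And>E. convex_subgroup E \<Longrightarrow> E \<subset> D \<Longrightarrow> E \<subseteq> D'"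
    and g: "\<gamma> \<in> D" "\<gamma> \<notin> D'" "integral_fract \<gamma>"
    and "b \<in> D" "s \<in> D" "s' \<in> D" "\<not> integral_fract (s' / s)" "s' / s \<notin> D'"
  shows "\<exists>n M N. integral_fract ((b / s')^N / \<gamma>^M * \<gamma>^n) \<and>
    (\<forall>t\<in>D. integral_fract ((b / t)^N / \<gamma>^M * \<gamma>^n) \<longrightarrow> integral_fract (s / t))"
proof -
  have nz: "x \<noteq> 0" if "x \<in> D" for x using that convex_subgroup_nonzero[OF D] by blast
  define \<delta> where "\<delta> = s / s'"
  have "integral_fract \<delta>"
    unfolding \<delta>_def using valuation_ring_divide_cases[OF VR assms(11)] .
  have "\<delta> \<in> D" unfolding \<delta>_def using convex_subgroup_divide[OF D] assms(9,10) by blast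
  have "\<delta> \<notin> D'" unfolding \<delta>_def using assms(12) convex_subgroup_inverse_iff[OF D', of "s' / s"] by simp
  then obtain N0 where "integral_fract (\<delta>^N0 / \<gamma>)"
    using convex_subgroup_archimedean[OF VR D D' below \<open>\<delta> \<in> D\<close> _ \<open>integral_fract \<delta>\<close> g(1)] by blast
  define N where "N = Suc N0"
  have \<delta>N: "integral_fract (\<delta>^N / \<gamma>)"
    using \<open>integral_fract (\<delta>^N0 / \<gamma>)\<close> \<open>integral_fract \<delta>\<close> unfolding N_def
    by (metis integral_fract_mult power_Suc times_divide_eq_right)
  have "s' / b \<in> D" using convex_subgroup_divide[OF D] assms(8,10) by blast
  then have "(s' / b)^N \<in> D" by (rule convex_subgroup_power[OF D])
  then obtain M where M: "integral_fract (\<gamma>^M / (s' / b)^N)" "integral_fract (\<gamma>^M * (s' / b)^N)"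
    using convex_subgroup_archimedean[OF VR D D' below g] by blast
  define \<rho> where "\<rho> = (b / s')^N / \<gamma>^M"
  have "\<rho> * \<gamma>^(M + M) = \<gamma>^M / (s' / b)^N"
    unfolding \<rho>_def power_add using nz g(1) assms(8,10) by (simp add: power_divide field_simps)
  with M(1) have "integral_fract (\<rho> * \<gamma>^(M + M))" by simp
  moreover have "\<not> integral_fract (\<rho> / \<gamma>)"
  proof
    assume "integral_fract (\<rho> / \<gamma>)"
    moreover have "\<rho> / \<gamma> * (\<gamma>^M * (s' / b)^N) = inverse \<gamma>"
      unfolding \<rho>_def using nz g(1) assms(8,10) by (simp add: power_divide field_simps)
    ultimately have "integral_fract (inverse \<gamma>)" using M by (metis integral_fract_mult)
    then show False using convex_subgroup_unit[OF D'] nz g by blast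
  qed
  ultimately obtain n where n: "integral_fract (\<rho> * \<gamma>^n)" "\<not> integral_fract (\<rho> * \<gamma>^n / \<gamma>)"
    using exists_least_integral_power by blast
  have "integral_fract (s / t)" if "t \<in> D" "integral_fract ((b / t)^N / \<gamma>^M * \<gamma>^n)" for t
    using integral_fract_divide_squeeze[OF VR _ _ _ _ \<delta>N[unfolded \<delta>_def] n(2)[unfolded \<rho>_def] that(2)]
      nz that(1) assms(9,10) g(1) by blast
  then show ?thesis using n(1) unfolding \<rho>_def by auto
qed

text \<open>If the image of \<open>S\<close> in \<open>D/D'\<close> has no least element, the elements of \<open>S\<close> chosen below each of
  the countably many bounds of \<open>exists_power_bound_between\<close> are coinitial.\<close>
lemma countable_coinitial_without_least:
  assumes VR: "valuation_ring TYPE('r::idom)"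
    and D: "convex_subgroup (D::'r fract set)" and D': "convex_subgroup D'"
    and below: "\<And>E. convex_subgroup E \<Longrightarrow> E \<subset> D \<Longrightarrow> E \<subseteq> D'"
    and g: "\<gamma> \<in> D" "\<gamma> \<notin> D'" "integral_fract \<gamma>"
    and S: "S \<subseteq> D" "b \<in> S"
    and no_least: "\<forall>s0\<in>S. \<exists>s\<in>S. \<not> integral_fract (s / s0) \<and> s / s0 \<notin> D'"
  shows "\<exists>C. countable C \<and> coinitial C S"
proof -
  define P where "P = (\<lambda>(n, M, N :: nat) t. t \<in> S \<and> integral_fract ((b / t)^N / \<gamma>^M * \<gamma>^n))"
  define C where "C = (\<lambda>i. SOME t. P i t) ` {i. \<exists>t. P i t}"
  have some_P: "P i (SOME t. P i t)" if "\<exists>t. P i t" for i using someI_ex[OF that] .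
  then have "C \<subseteq> S" unfolding C_def P_def by fastforce
  moreover have "\<exists>c\<in>C. integral_fract (s / c)" if s: "s \<in> S" for s
  proof -
    obtain s' where s': "s' \<in> S" "\<not> integral_fract (s' / s)" "s' / s \<notin> D'"
      using no_least s by blast
    then obtain n M N where
      bound: "\<forall>t\<in>D. integral_fract ((b / t)^N / \<gamma>^M * \<gamma>^n) \<longrightarrow> integral_fract (s / t)"
      and "P (n, M, N) s'"
      using exists_power_bound_between[OF VR D D' below g] S s unfolding P_def by blast
    then have "P (n, M, N) (SOME t. P (n, M, N) t)" "(SOME t. P (n, M, N) t) \<in> C"
      using some_P unfolding C_def by blast+
    then show ?thesis using bound S(1) unfolding P_def by auto
  qed
  moreover have "countable C" unfolding C_def by (rule countable_image) simp
  ultimately show ?thesis unfolding coinitial_def by blast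
qed

lemma countable_coinitial_from_rescaled:
  assumes s0: "s0 \<in> S" "0 \<notin> S" "\<forall>s\<in>S. integral_fract (s / s0) \<or> s / s0 \<in> X"
    and C': "countable C'" "coinitial C' ((\<lambda>s. s / s0) ` {s\<in>S. s / s0 \<in> X})"
  shows "\<exists>C. countable C \<and> coinitial C S"
proof -
  define C where "C = insert s0 ((*) s0 ` C')"
  have "(*) s0 ` (\<lambda>s. s / s0) ` {s\<in>S. s / s0 \<in> X} \<subseteq> S" using s0(1,2) by force
  then have "C \<subseteq> S" using C'(2) s0(1) unfolding C_def coinitial_def by blast
  moreover have "countable C" unfolding C_def using C'(1) by simp
  moreover have "\<exists>c\<in>C. integral_fract (s / c)" if "s \<in> S" for s
  proof (cases "s / s0 \<in> X")
    case True
    then obtain c where "c \<in> C'" "integral_fract (s / s0 / c)"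
      using C'(2) \<open>s \<in> S\<close> unfolding coinitial_def by blast
    moreover have "s0 * c \<in> C" unfolding C_def using \<open>c \<in> C'\<close> by blast
    moreover have "s / (s0 * c) = s / s0 / c" by simp
    ultimately show ?thesis by metis
  next
    case False
    then show ?thesis using s0 that unfolding C_def by blast
  qed
  ultimately show ?thesis unfolding coinitial_def by blast
qed

lemma card_convex_subgroups_below_less:
  assumes "finite {E. convex_subgroup E \<and> E \<subset> D}" "convex_subgroup D'" "D' \<subset> D"
  shows "card {E. convex_subgroup E \<and> E \<subset> D'} < card {E. convex_subgroup E \<and> E \<subset> D}"
proof -
  have "{E. convex_subgroup E \<and> E \<subset> D'} \<subseteq> {E. convex_subgroup E \<and> E \<subset> D}"
    using assms(3) by (auto intro: psubset_trans)
  moreover have "D' \<in> {E. convex_subgroup E \<and> E \<subset> D} - {E. convex_subgroup E \<and> E \<subset> D'}"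
    using assms(2,3) by simp
  ultimately show ?thesis by (intro psubset_card_mono[OF assms(1)]) blast
qed

text \<open>With \<open>D'\<close> the largest convex subgroup below \<open>D\<close>: either the image of \<open>S\<close> in \<open>D/D'\<close> has a least
  element, and after rescaling the problem moves into \<open>D'\<close>, or it has none.\<close>
lemma countable_coinitial_step:
  assumes VR: "valuation_ring TYPE('r::idom)"
    and D: "convex_subgroup (D::'r fract set)" and D': "convex_subgroup D'" "D' \<subset> D"
    and below: "\<And>E. convex_subgroup E \<Longrightarrow> E \<subset> D \<Longrightarrow> E \<subseteq> D'"
    and S: "S \<subseteq> D" "b \<in> S"
    and IH: "\<And>S'. S' \<subseteq> D' \<Longrightarrow> \<exists>C. countable C \<and> coinitial C S'"
  shows "\<exists>C. countable C \<and> coinitial C S"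
proof (cases "\<exists>s0\<in>S. \<forall>s\<in>S. integral_fract (s / s0) \<or> s / s0 \<in> D'")
  case True
  then obtain s0 where s0: "s0 \<in> S" "\<forall>s\<in>S. integral_fract (s / s0) \<or> s / s0 \<in> D'"
    by blast
  have "(\<lambda>s. s / s0) ` {s\<in>S. s / s0 \<in> D'} \<subseteq> D'" by blast
  then obtain C' where "countable C'" "coinitial C' ((\<lambda>s. s / s0) ` {s\<in>S. s / s0 \<in> D'})"
    using IH by blast
  moreover have "0 \<notin> S" using S(1) convex_subgroup_nonzero[OF D] by blast
  ultimately show ?thesis using countable_coinitial_from_rescaled s0 by blast
next
  case False
  then have "\<forall>s0\<in>S. \<exists>s\<in>S. \<not> integral_fract (s / s0) \<and> s / s0 \<notin> D'" by blast
  moreover obtain \<gamma> where "\<gamma> \<in> D" "\<gamma> \<notin> D'" "integral_fract \<gamma>"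
    using convex_subgroup_integral_representative[OF VR D D'(1)] D'(2) by blast
  ultimately show ?thesis
    using countable_coinitial_without_least[OF VR D D'(1) below _ _ _ S] by blast
qed

lemma countable_coinitial_in_convex_subgroup:
  assumes VR: "valuation_ring TYPE('r::idom)" and FR: "finite_rank TYPE('r)"
    and "convex_subgroup (D::'r fract set)" "S \<subseteq> D"
  shows "\<exists>C. countable C \<and> coinitial C S"
  using assms(3,4)
proof (induction "card {E. convex_subgroup E \<and> E \<subset> D}" arbitrary: D S rule: less_induct)
  case less
  note D = \<open>convex_subgroup D\<close>
  have fin: "finite {E. convex_subgroup E \<and> E \<subset> D}"
    using finite_convex_subgroups[OF VR FR] by (rule finite_subset[rotated]) blast
  show ?case
  proof (cases "S = {}")
    case True
    then show ?thesis unfolding coinitial_def by blast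
  next
    case False
    then obtain b where b: "b \<in> S" by blast
    consider "{E. convex_subgroup E \<and> E \<subset> D} = {}"
      | D' where "convex_subgroup D'" "D' \<subset> D" "\<forall>E\<in>{E. convex_subgroup E \<and> E \<subset> D}. D' \<le> E \<longrightarrow> D' = E"
      using finite_has_maximal[OF fin] by blast
    then show ?thesis
    proof cases
      case 1
      then have "D = unit_fracts"
        using unit_fracts_subset[OF D] convex_subgroup_unit_fracts by blast
      then have "coinitial {b} S"
        using convex_subgroup_divide[OF D] b less.prems(2) unfolding unit_fracts_def coinitial_def by blast
      then show ?thesis by blast
    next
      case (2 D')
      have below: "E \<subseteq> D'" if "convex_subgroup E" "E \<subset> D" for E
        using convex_subgroup_linear[OF VR that(1) 2(1)] 2(3) that by blast
      obtain C where "countable C" "coinitial C S"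
        using countable_coinitial_step[OF VR D 2(1,2) below less.prems(2) b]
          less.hyps[OF card_convex_subgroups_below_less[OF fin 2(1,2)] 2(1)] by blast
      then show ?thesis by blast
    qed
  qed
qed

lemma countable_coinitial:
  assumes "valuation_ring TYPE('r::idom)" "finite_rank TYPE('r)" "S \<subseteq> {x::'r fract. x \<noteq> 0}"
  shows "\<exists>C. countable C \<and> coinitial C S"
  using countable_coinitial_in_convex_subgroup[OF assms(1,2) convex_subgroup_nonzero_fracts assms(3)] .

section \<open>Colimits of chains of free modules\<close>

lemma (in module) in_span_range_imp_in_span_prefix:
  fixes g :: "nat \<Rightarrow> 'b"
  assumes "m \<in> span (range g)"
  shows "\<exists>n. m \<in> span (g ` {..<n})"
proof -
  obtain t r where m: "m = (\<Sum>a\<in>t. r a *s a)" and t: "finite t" "t \<subseteq> range g"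
    using assms unfolding span_explicit by blast
  obtain C where C: "t = g ` C" "finite C" using finite_subset_image[OF t] by blast
  obtain n where "C \<subseteq> {..<n}" using finite_nat_bounded[OF C(2)] by blast
  then have "span t \<subseteq> span (g ` {..<n})" unfolding C(1) by (intro span_mono image_mono)
  moreover have "m \<in> span t" unfolding m by (rule span_sum, rule span_scale, rule span_base)
  ultimately show ?thesis by blast
qed

locale free_module_chain = module scale for scale :: "'a::comm_ring_1 \<Rightarrow> 'b::ab_group_add \<Rightarrow> 'b" (infixr \<open>*s\<close> 75) +
  fixes T :: "nat \<Rightarrow> 'b set" and G :: "nat \<Rightarrow> nat \<Rightarrow> 'b"
  assumes finite_T: "finite (T n)" and independent_T: "independent (T n)"
    and bij_G: "bij_betw (G n) {..<card (T n)} (T n)"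
    and chain: "i \<le> j \<Longrightarrow> T i \<subseteq> span (T j)"
begin

lemma sum_G_reindex: "(\<Sum>a<card (T n). f (G n a)) = (\<Sum>v\<in>T n. f v)"
  using sum.reindex_bij_betw[OF bij_G] .

lemma in_span_T_iff: "m \<in> span (T n) \<longleftrightarrow> (\<exists>c. m = (\<Sum>a<card (T n). c a *s G n a))"
proof
  assume "m \<in> span (T n)"
  then obtain u where "m = (\<Sum>v\<in>T n. u v *s v)" using span_finite[OF finite_T] by auto
  then show "\<exists>c. m = (\<Sum>a<card (T n). c a *s G n a)"
    using sum_G_reindex[of "\<lambda>v. u v *s v" n] by (intro exI[of _ "\<lambda>a. u (G n a)"]) simp
next
  assume "\<exists>c. m = (\<Sum>a<card (T n). c a *s G n a)"
  then obtain c where m: "m = (\<Sum>a<card (T n). c a *s G n a)" ..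
  show "m \<in> span (T n)"
    unfolding m by (rule span_sum, rule span_scale, rule span_base, erule bij_betw_apply[OF bij_G])
qed

lemma G_coeff_unique:
  assumes "(\<Sum>a<card (T n). u a *s G n a) = (\<Sum>a<card (T n). w a *s G n a)" "a < card (T n)"
  shows "u a = w a"
proof -
  let ?inv = "the_inv_into {..<card (T n)} (G n)"
  have inv: "?inv (G n a) = a" if "a < card (T n)" for a
    using bij_G that by (simp add: bij_betw_def the_inv_into_f_f)
  have "(\<Sum>a<card (T n). (u a - w a) *s G n a) = 0"
    using assms(1) by (simp add: scale_left_diff_distrib sum_subtractf)
  moreover have "(\<Sum>a<card (T n). (u a - w a) *s G n a) = (\<Sum>v\<in>T n. (u (?inv v) - w (?inv v)) *s v)"
    using sum_G_reindex[of "\<lambda>v. (u (?inv v) - w (?inv v)) *s v" n] by (auto simp: inv intro!: sum.cong)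
  ultimately have "(\<Sum>v\<in>T n. (u (?inv v) - w (?inv v)) *s v) = 0" by simp
  then have "u (?inv (G n a)) - w (?inv (G n a)) = 0"
    using bij_betw_apply[OF bij_G, of a n] assms(2)
    by (intro independentD[OF independent_T finite_T order_refl, where u = "\<lambda>v. u (?inv v) - w (?inv v)"]) auto
  then show ?thesis using inv[OF assms(2)] by simp
qed

definition transition :: "nat \<Rightarrow> nat \<Rightarrow> nat \<Rightarrow> nat \<Rightarrow> 'a" where
  "transition i j a = (SOME c. G i a = (\<Sum>b<card (T j). c b *s G j b))"

lemma G_eq_transition:
  assumes "i \<le> j" "a < card (T i)"
  shows "G i a = (\<Sum>b<card (T j). transition i j a b *s G j b)"
proof -
  have "G i a \<in> span (T j)" using chain[OF assms(1)] bij_betw_apply[OF bij_G, of a i] assms(2) by auto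
  then show ?thesis unfolding transition_def in_span_T_iff by (rule someI_ex)
qed

lemma sum_delta_G: "a < card (T n) \<Longrightarrow> (\<Sum>b<card (T n). (if a = b then 1 else 0) *s G n b) = G n a"
  by (simp add: if_distrib[of "\<lambda>c. c *s _"] sum.delta cong: if_cong)

lemma transition_refl:
  assumes "a < card (T i)" "b < card (T i)"
  shows "transition i i a b = (if a = b then 1 else 0)"
proof -
  have "(\<Sum>b<card (T i). transition i i a b *s G i b) = (\<Sum>b<card (T i). (if a = b then 1 else 0) *s G i b)"
    using G_eq_transition[OF order_refl assms(1)] sum_delta_G[OF assms(1)] by simp
  from G_coeff_unique[OF this assms(2)] show ?thesis .
qed

lemma sum_scale_sum_swap:
  "(\<Sum>a<k. x a *s (\<Sum>b<l. y a b *s v b)) = (\<Sum>b<l. (\<Sum>a<k. x a * y a b) *s v b)"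
  by (simp add: scale_sum_right scale_sum_left sum.swap[of _ "{..<k}"])

lemma transition_trans:
  assumes "i \<le> j" "j \<le> l" "a < card (T i)" "c < card (T l)"
  shows "transition i l a c = (\<Sum>b<card (T j). transition i j a b * transition j l b c)"
proof -
  have "(\<Sum>c<card (T l). transition i l a c *s G l c) = G i a"
    using G_eq_transition[OF order_trans[OF assms(1,2)] assms(3)] by simp
  also have "\<dots> = (\<Sum>b<card (T j). transition i j a b *s G j b)"
    using G_eq_transition[OF assms(1) assms(3)] .
  also have "\<dots> = (\<Sum>b<card (T j). transition i j a b *s (\<Sum>c<card (T l). transition j l b c *s G l c))"
    using G_eq_transition[OF assms(2)] by (intro sum.cong) auto
  also have "\<dots> = (\<Sum>c<card (T l). (\<Sum>b<card (T j). transition i j a b * transition j l b c) *s G l c)"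
    by (rule sum_scale_sum_swap)
  finally show ?thesis by (rule G_coeff_unique[OF _ assms(4)])
qed

lemma span_T_mono: "i \<le> j \<Longrightarrow> span (T i) \<subseteq> span (T j)"
  using span_minimal[OF chain subspace_span] .

lemma sum_G_transition:
  assumes "i \<le> j"
  shows "(\<Sum>a<card (T i). c a *s G i a)
    = (\<Sum>b<card (T j). (\<Sum>a<card (T i). c a * transition i j a b) *s G j b)"
proof -
  have "(\<Sum>a<card (T i). c a *s G i a)
      = (\<Sum>a<card (T i). c a *s (\<Sum>b<card (T j). transition i j a b *s G j b))"
    using G_eq_transition[OF assms] by (intro sum.cong) auto
  also have "\<dots> = (\<Sum>b<card (T j). (\<Sum>a<card (T i). c a * transition i j a b) *s G j b)"
    by (rule sum_scale_sum_swap)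
  finally show ?thesis .
qed

lemma in_pM_sum_G_imp_transition_dvd:
  assumes "\<And>m. \<exists>n. m \<in> span (T n)" and "in_pM scale p (\<Sum>a<card (T i). c a *s G i a)"
  shows "\<exists>j\<ge>i. \<forall>b<card (T j). of_nat p dvd (\<Sum>a<card (T i). c a * transition i j a b)"
proof -
  obtain m where m: "(\<Sum>a<card (T i). c a *s G i a) = of_nat p *s m"
    using assms(2) unfolding in_pM_def by blast
  obtain j0 where "m \<in> span (T j0)" using assms(1) by blast
  define j where "j = max i j0"
  have "i \<le> j" unfolding j_def by simp
  have "m \<in> span (T j)" using \<open>m \<in> span (T j0)\<close> span_T_mono[of j0 j] unfolding j_def by auto
  then obtain w where w: "m = (\<Sum>b<card (T j). w b *s G j b)"
    unfolding in_span_T_iff by blast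
  have "(\<Sum>b<card (T j). (\<Sum>a<card (T i). c a * transition i j a b) *s G j b)
      = (\<Sum>a<card (T i). c a *s G i a)"
    using sum_G_transition[OF \<open>i \<le> j\<close>] by simp
  also have "\<dots> = (\<Sum>b<card (T j). (of_nat p * w b) *s G j b)"
    unfolding m w by (simp add: scale_sum_right)
  finally have "(\<Sum>a<card (T i). c a * transition i j a b) = of_nat p * w b" if "b < card (T j)" for b
    by (rule G_coeff_unique[OF _ that])
  then show ?thesis using \<open>i \<le> j\<close> by auto
qed

theorem free_countable_filtered_colimit:
  assumes "\<And>n. card (T n) \<le> d" and "\<And>m. \<exists>n. m \<in> span (T n)"
  shows "free_countable_filtered_colimit scale p d"
  unfolding free_countable_filtered_colimit_def
proof (intro exI[of _ UNIV] exI[of _ "(\<le>)"] exI[of _ "\<lambda>n. card (T n)"] exI[of _ transition] exI[of _ G]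
    conjI ballI allI impI)
  show "\<exists>l\<in>UNIV. i \<le> l \<and> j \<le> l" for i j :: nat by (intro bexI[of _ "max i j"]) auto
  show "of_nat p dvd (transition i i a b - (if a = b then 1 else 0))"
    if "a < card (T i)" "b < card (T i)" for i a b
    using transition_refl[OF that] by simp
  show "of_nat p dvd (transition i l a c - (\<Sum>b<card (T j). transition i j a b * transition j l b c))"
    if "i \<le> j" "j \<le> l" "a < card (T i)" "c < card (T l)" for i j l a c
    using transition_trans[OF that] by simp
  show "in_pM scale p (G i a - (\<Sum>b<card (T j). transition i j a b *s G j b))"
    if "i \<le> j" "a < card (T i)" for i j a
    using G_eq_transition[OF that] unfolding in_pM_def by (intro exI[of _ 0]) simp
  show "\<exists>i\<in>UNIV. \<exists>c. in_pM scale p (m - (\<Sum>a<card (T i). c a *s G i a))" for m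
  proof -
    obtain i c where "m = (\<Sum>a<card (T i). c a *s G i a)"
      using assms(2)[of m] unfolding in_span_T_iff by blast
    then have "in_pM scale p (m - (\<Sum>a<card (T i). c a *s G i a))"
      unfolding in_pM_def by (intro exI[of _ 0]) simp
    then show ?thesis by blast
  qed
  show "\<exists>j\<in>UNIV. i \<le> j \<and> (\<forall>b<card (T j). of_nat p dvd (\<Sum>a<card (T i). c a * transition i j a b))"
    if "in_pM scale p (\<Sum>a<card (T i). c a *s G i a)" for i c
    using in_pM_sum_G_imp_transition_dvd[OF assms(2) that] by blast
qed (use assms(1) in auto)

end

section \<open>Coordinates in \<open>M \<otimes> E\<close> and echelon forms\<close>

locale tensor_basis_module = module scale for scale :: "'r::idom \<Rightarrow> 'm::ab_group_add \<Rightarrow> 'm" (infixr \<open>*s\<close> 75) +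
  fixes B :: "'m set"
  assumes torsionfree: "torsionfree scale" and tensor_basis: "tensor_basis scale B"
begin

abbreviation d :: nat where "d \<equiv> card B"

definition basis_vec :: "nat \<Rightarrow> 'm" where
  "basis_vec = (SOME h. bij_betw h {..<d} B)"

lemma bij_basis_vec: "bij_betw basis_vec {..<d} B"
proof -
  have "finite B" using tensor_basis unfolding tensor_basis_def by blast
  then have "\<exists>h. bij_betw h {..<d} B"
    using ex_bij_betw_nat_finite by (simp add: lessThan_atLeast0)
  then show ?thesis unfolding basis_vec_def by (rule someI_ex)
qed

lemma sum_basis_vec_eq_0:
  assumes "(\<Sum>j<d. u j *s basis_vec j) = 0" "j < d"
  shows "u j = 0"
proof -
  let ?inv = "the_inv_into {..<d} basis_vec"
  have inv: "?inv (basis_vec j) = j" if "j < d" for j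
    using bij_basis_vec that by (simp add: bij_betw_def the_inv_into_f_f)
  have "(\<Sum>v\<in>B. u (?inv v) *s v) = (\<Sum>j<d. u j *s basis_vec j)"
    using sum.reindex_bij_betw[OF bij_basis_vec, of "\<lambda>v. u (?inv v) *s v"]
    by (auto simp: inv intro!: sum.cong)
  then have "u (?inv (basis_vec j)) = 0"
    using tensor_basis assms bij_betw_apply[OF bij_basis_vec, of j] unfolding tensor_basis_def
    by (intro independentD[where u = "\<lambda>v. u (?inv v)" and t = B]) auto
  then show ?thesis using inv[OF assms(2)] by simp
qed

lemma common_denominator: "\<exists>r u. r \<noteq> 0 \<and> r *s m = (\<Sum>j<d. u j *s basis_vec j)"
proof -
  have "finite B" using tensor_basis unfolding tensor_basis_def by blast
  obtain r where "r \<noteq> 0" "r *s m \<in> span B" using tensor_basis unfolding tensor_basis_def by blast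
  then obtain u where "r *s m = (\<Sum>v\<in>B. u v *s v)" unfolding span_finite[OF \<open>finite B\<close>] by blast
  also have "\<dots> = (\<Sum>j<d. u (basis_vec j) *s basis_vec j)"
    by (rule sum.reindex_bij_betw[OF bij_basis_vec, symmetric])
  finally show ?thesis
    using \<open>r \<noteq> 0\<close> by (auto intro!: exI[of _ r] exI[of _ "\<lambda>j. u (basis_vec j)"])
qed

text \<open>The coordinates of \<open>m \<otimes> 1 \<in> M \<otimes> E\<close> in the basis \<open>basis_vec\<close>.\<close>
definition coord :: "'m \<Rightarrow> nat \<Rightarrow> 'r fract" where
  "coord m j = (let (r, u) = (SOME (r, u). r \<noteq> 0 \<and> r *s m = (\<Sum>j<d. u j *s basis_vec j)) in Fract (u j) r)"

lemma coord_eq: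
  assumes "r \<noteq> 0" "r *s m = (\<Sum>j<d. u j *s basis_vec j)" "j < d"
  shows "coord m j = Fract (u j) r"
proof -
  obtain r' u' where some: "(SOME (r, u). r \<noteq> 0 \<and> r *s m = (\<Sum>j<d. u j *s basis_vec j)) = (r', u')"
    by fastforce
  have "\<exists>ru. case ru of (r, u) \<Rightarrow> r \<noteq> 0 \<and> r *s m = (\<Sum>j<d. u j *s basis_vec j)"
    using common_denominator by auto
  from someI_ex[OF this] have r': "r' \<noteq> 0" "r' *s m = (\<Sum>j<d. u' j *s basis_vec j)"
    unfolding some by auto
  have "(\<Sum>j<d. (r * u' j - r' * u j) *s basis_vec j) = r *s (r' *s m) - r' *s (r *s m)"
    using assms(2) r'(2)
    by (simp add: scale_sum_right scale_left_diff_distrib sum_subtractf)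
  also have "\<dots> = 0" by (simp add: mult.commute)
  finally have "r * u' j - r' * u j = 0" by (rule sum_basis_vec_eq_0[OF _ assms(3)])
  then show ?thesis unfolding coord_def some using assms(1) r'(1) by (simp add: eq_fract mult.commute)
qed

lemma coord_add: "j < d \<Longrightarrow> coord (m1 + m2) j = coord m1 j + coord m2 j"
proof -
  assume j: "j < d"
  obtain r1 u1 r2 u2 where 1: "r1 \<noteq> 0" "r1 *s m1 = (\<Sum>j<d. u1 j *s basis_vec j)"
    and 2: "r2 \<noteq> 0" "r2 *s m2 = (\<Sum>j<d. u2 j *s basis_vec j)" using common_denominator by meson
  have "(r1 * r2) *s (m1 + m2) = r2 *s (r1 *s m1) + r1 *s (r2 *s m2)"
    by (simp add: scale_right_distrib mult.commute)
  also have "\<dots> = (\<Sum>j<d. (r2 * u1 j + r1 * u2 j) *s basis_vec j)"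
    using 1 2 by (simp add: scale_sum_right scale_left_distrib sum.distrib)
  finally have "coord (m1 + m2) j = Fract (r2 * u1 j + r1 * u2 j) (r1 * r2)"
    using 1 2 by (intro coord_eq[OF _ _ j]) simp_all
  then show ?thesis using coord_eq[OF 1 j] coord_eq[OF 2 j] 1(1) 2(1) by (simp add: add_fract ac_simps)
qed

lemma coord_scale: "j < d \<Longrightarrow> coord (a *s m) j = Fract a 1 * coord m j"
proof -
  assume j: "j < d"
  obtain r u where 1: "r \<noteq> 0" "r *s m = (\<Sum>j<d. u j *s basis_vec j)" using common_denominator by meson
  have "r *s (a *s m) = a *s (r *s m)" by (rule scale_left_commute)
  also have "\<dots> = (\<Sum>j<d. (a * u j) *s basis_vec j)" using 1 by (simp add: scale_sum_right)
  finally have "coord (a *s m) j = Fract (a * u j) r" using 1 by (intro coord_eq[OF _ _ j]) simp_all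
  then show ?thesis using coord_eq[OF 1 j] by simp
qed

lemma coord_diff: "j < d \<Longrightarrow> coord (m1 - m2) j = coord m1 j - coord m2 j"
  using coord_add[of j "m1 - m2" m2] by simp

lemma coord_0: "j < d \<Longrightarrow> coord 0 j = 0"
  using coord_diff[of j 0 0] by simp

lemma coord_sum: "j < d \<Longrightarrow> coord (\<Sum>x\<in>X. f x) j = (\<Sum>x\<in>X. coord (f x) j)"
  by (induct X rule: infinite_finite_induct) (auto simp: coord_0 coord_add)

lemma coord_eq_0_imp_eq_0: "(\<And>j. j < d \<Longrightarrow> coord m j = 0) \<Longrightarrow> m = 0"
proof -
  assume coord0: "\<And>j. j < d \<Longrightarrow> coord m j = 0"
  obtain r u where 1: "r \<noteq> 0" "r *s m = (\<Sum>j<d. u j *s basis_vec j)" using common_denominator by meson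
  have "u j = 0" if "j < d" for j using coord_eq[OF 1 that] coord0[OF that] 1(1)
    by (simp add: Zero_fract_def eq_fract)
  then have "r *s m = 0" using 1(2) by simp
  then show "m = 0" using torsionfree 1(1) unfolding torsionfree_def by blast
qed

definition flag :: "nat \<Rightarrow> 'm set" where
  "flag k = {m. \<forall>j. k \<le> j \<longrightarrow> j < d \<longrightarrow> coord m j = 0}"

lemma subspace_flag: "subspace (flag k)"
  unfolding subspace_def flag_def by (simp add: coord_0 coord_add coord_scale)

lemma flag_0: "flag 0 = {0}"
  using coord_eq_0_imp_eq_0 by (auto simp: flag_def coord_0)

lemma flag_d: "flag d = UNIV"
  unfolding flag_def by auto

lemma flag_SucD:
  assumes "m \<in> flag (Suc k)" "coord m k = 0"
  shows "m \<in> flag k"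
proof -
  have "coord m j = 0" if "k \<le> j" "j < d" for j
    using assms that unfolding flag_def by (cases "j = k") auto
  then show ?thesis unfolding flag_def by blast
qed

lemma coord_flag: "m \<in> flag k \<Longrightarrow> k \<le> j \<Longrightarrow> j < d \<Longrightarrow> coord m j = 0"
  unfolding flag_def by blast

end

lemma finite_has_least_valuation:
  assumes VR: "valuation_ring TYPE('r::idom)"
    and "finite X" "X \<noteq> {}" "0 \<notin> (X :: 'r fract set)"
  shows "\<exists>x0\<in>X. \<forall>x\<in>X. integral_fract (x / x0)"
  using assms(2-)
proof (induction X rule: finite_ne_induct)
  case (singleton x)
  then show ?case by simp
next
  case (insert x X)
  then obtain x0 where x0: "x0 \<in> X" "\<forall>y\<in>X. integral_fract (y / x0)" by auto
  have "x \<noteq> 0" "x0 \<noteq> 0" using insert.prems x0(1) by auto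
  show ?case
  proof (cases "integral_fract (x / x0)")
    case True
    then show ?thesis using x0 \<open>x0 \<noteq> 0\<close> by auto
  next
    case False
    then have "integral_fract (x0 / x)" by (rule valuation_ring_divide_cases[OF VR])
    moreover have "y / x = (y / x0) * (x0 / x)" for y using \<open>x0 \<noteq> 0\<close> by simp
    ultimately have "\<forall>y\<in>X. integral_fract (y / x)" using x0(2) by (metis integral_fract_mult)
    then show ?thesis using \<open>x \<noteq> 0\<close> by auto
  qed
qed

context tensor_basis_module
begin

definition triangular :: "'m set \<Rightarrow> ('m \<Rightarrow> nat) \<Rightarrow> bool" where
  "triangular T lev \<longleftrightarrow> inj_on lev T \<and> (\<forall>t\<in>T. lev t < d \<and> t \<in> flag (Suc (lev t)) \<and> coord t (lev t) \<noteq> 0)"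

lemma coord_nonzero_imp_less:
  assumes "m \<in> flag k" "coord m j \<noteq> 0" "j < d"
  shows "j < k"
proof (rule ccontr)
  assume "\<not> j < k"
  then show False using coord_flag[OF assms(1) _ assms(3)] assms(2) by simp
qed

lemma independent_triangular:
  assumes fin: "finite T" and tri: "triangular T lev"
  shows "independent T"
proof -
  have "u t = 0" if sum0: "(\<Sum>t\<in>T. u t *s t) = 0" and "t \<in> T" for u t
  proof (rule ccontr)
    assume "u t \<noteq> 0"
    define A where "A = {t\<in>T. u t \<noteq> 0}"
    have "finite A" "t \<in> A" using fin \<open>t \<in> T\<close> \<open>u t \<noteq> 0\<close> unfolding A_def by auto
    define L where "L = Max (lev ` A)"
    have "L \<in> lev ` A" unfolding L_def using \<open>finite A\<close> \<open>t \<in> A\<close> by (intro Max_in) auto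
    then obtain t0 where t0: "t0 \<in> T" "u t0 \<noteq> 0" "lev t0 = L" unfolding A_def by blast
    have "L < d" "coord t0 L \<noteq> 0" using tri t0 unfolding triangular_def by auto
    have others: "Fract (u t) 1 * coord t L = 0" if "t \<in> T" "t \<noteq> t0" for t
    proof (cases "u t = 0")
      case False
      then have "lev t \<le> L" unfolding L_def using \<open>finite A\<close> that(1) by (intro Max_ge) (auto simp: A_def)
      moreover have "lev t \<noteq> L"
        using inj_onD[of lev T t t0] tri that t0 unfolding triangular_def by auto
      ultimately have "Suc (lev t) \<le> L" by simp
      then have "coord t L = 0"
        using tri that(1) coord_flag[of t "Suc (lev t)" L] \<open>L < d\<close> unfolding triangular_def by blast
      then show ?thesis by simp
    qed (simp add: Zero_fract_def)
    have "0 = coord (\<Sum>t\<in>T. u t *s t) L" using sum0 coord_0 \<open>L < d\<close> by simp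
    also have "\<dots> = (\<Sum>t\<in>T. Fract (u t) 1 * coord t L)" using \<open>L < d\<close> by (simp add: coord_sum coord_scale)
    also have "\<dots> = Fract (u t0) 1 * coord t0 L + (\<Sum>t\<in>T - {t0}. Fract (u t) 1 * coord t L)"
      by (rule sum.remove[OF fin t0(1)])
    also have "(\<Sum>t\<in>T - {t0}. Fract (u t) 1 * coord t L) = 0"
      using others by (intro sum.neutral) blast
    finally show False using t0(2) \<open>coord t0 L \<noteq> 0\<close> by simp
  qed
  then show ?thesis using dependent_finite[OF fin] by blast
qed

lemma card_triangular_le: "triangular T lev \<Longrightarrow> card T \<le> d"
  using card_inj_on_le[of lev T "{..<d}"] unfolding triangular_def by auto

end

locale tensor_basis_module_over_valuation_ring =
  tensor_basis_module scale B for scale :: "'r::idom \<Rightarrow> 'm::ab_group_add \<Rightarrow> 'm" (infixr \<open>*s\<close> 75) and B +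
  assumes valuation_ring: "valuation_ring TYPE('r)"
begin

text \<open>One step of Gaussian elimination over \<open>E\<^sup>+\<close>: a pivot \<open>s0\<close> whose \<open>k\<close>-th coordinate has least
  valuation clears the \<open>k\<close>-th coordinate of all other elements.\<close>
lemma eliminate_coordinate:
  assumes "k < d" "finite S" "S \<subseteq> flag (Suc k)" "s1 \<in> S" "coord s1 k \<noteq> 0"
  shows "\<exists>s0\<in>S. coord s0 k \<noteq> 0 \<and> (\<exists>S'. finite S' \<and> S' \<subseteq> flag k \<and> span (insert s0 S') = span S)"
proof -
  let ?X = "(\<lambda>s. coord s k) ` {s\<in>S. coord s k \<noteq> 0}"
  obtain s0 where s0: "s0 \<in> S" "coord s0 k \<noteq> 0" and least: "\<forall>x\<in>?X. integral_fract (x / coord s0 k)"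
    using finite_has_least_valuation[OF valuation_ring, of ?X] assms(2,4,5) by fastforce
  have "integral_fract (coord s k / coord s0 k)" if "s \<in> S" for s
    using least that by (cases "coord s k = 0") auto
  then have "\<forall>s\<in>S. \<exists>b. coord s k / coord s0 k = Fract b 1" unfolding integral_fract_def by blast
  from bchoice[OF this] obtain a where a: "\<forall>s\<in>S. coord s k / coord s0 k = Fract (a s) 1" ..
  define S' where "S' = (\<lambda>s. s - a s *s s0) ` S"
  have "S' \<subseteq> flag k"
  proof
    fix x assume "x \<in> S'"
    then obtain s where s: "s \<in> S" "x = s - a s *s s0" unfolding S'_def by blast
    have "s \<in> flag (Suc k)" "s0 \<in> flag (Suc k)" using assms(3) s(1) s0(1) by auto
    then have "x \<in> flag (Suc k)"
      unfolding s(2) using subspace_diff[OF subspace_flag _ subspace_scale[OF subspace_flag]] by blast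
    moreover have "coord s k = Fract (a s) 1 * coord s0 k" using a s(1) s0(2) by (simp add: divide_eq_eq)
    then have "coord x k = 0" unfolding s(2) using assms(1) by (simp add: coord_diff coord_scale)
    ultimately show "x \<in> flag k" by (rule flag_SucD)
  qed
  moreover have "span (insert s0 S') = span S"
    unfolding span_eq
  proof
    have "s - a s *s s0 \<in> span S" if "s \<in> S" for s
      using span_diff[OF span_base[OF that] span_scale[OF span_base[OF s0(1)]]] .
    then show "insert s0 S' \<subseteq> span S" unfolding S'_def using span_base[OF s0(1)] by blast
    have "(s - a s *s s0) + a s *s s0 \<in> span (insert s0 S')" if "s \<in> S" for s
      using that unfolding S'_def by (intro span_add span_scale span_base) auto
    then show "S \<subseteq> span (insert s0 S')" by auto
  qed
  ultimately show ?thesis using s0 assms(2) unfolding S'_def by blast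
qed

lemma triangular_spanning_set_exists:
  assumes "k \<le> d" "finite S" "S \<subseteq> flag k"
  shows "\<exists>T lev. finite T \<and> span T = span S \<and> triangular T lev"
  using assms
proof (induction k arbitrary: S)
  case 0
  then have "span S = span {}" unfolding span_eq using flag_0 by auto
  then show ?case unfolding triangular_def by blast
next
  case (Suc k)
  show ?case
  proof (cases "\<exists>s1\<in>S. coord s1 k \<noteq> 0")
    case False
    then have "S \<subseteq> flag k" using Suc.prems(3) flag_SucD by blast
    then show ?thesis using Suc.IH Suc.prems(1,2) by simp
  next
    case True
    then obtain s0 S' where s0: "s0 \<in> S" "coord s0 k \<noteq> 0"
      and S': "finite S'" "S' \<subseteq> flag k" "span (insert s0 S') = span S"
      using eliminate_coordinate[of k S] Suc.prems by (metis Suc_le_eq)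
    obtain T' lev where T': "finite T'" "span T' = span S'" "triangular T' lev"
      using Suc.IH[OF _ S'(1,2)] Suc.prems(1) by auto
    have "T' \<subseteq> flag k" using S'(2) T'(2) span_superset span_minimal[OF _ subspace_flag] by blast
    then have lev_less: "lev t < k" if "t \<in> T'" for t
      using that T'(3) coord_nonzero_imp_less unfolding triangular_def by blast
    have "s0 \<notin> T'" using s0(2) \<open>T' \<subseteq> flag k\<close> Suc.prems(1) coord_flag by fastforce
    have "triangular (insert s0 T') (lev(s0 := k))"
      using T'(3) lev_less \<open>s0 \<notin> T'\<close> s0 Suc.prems unfolding triangular_def inj_on_def
      by (auto split: if_splits)
    moreover have "span (insert s0 T') = span S" using S'(3) T'(2) by (simp add: span_insert)
    ultimately show ?thesis using T'(1) by blast
  qed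
qed

lemma finite_span_has_small_basis:
  assumes "finite S"
  shows "\<exists>T. finite T \<and> independent T \<and> card T \<le> d \<and> span T = span S"
proof -
  obtain T lev where "finite T" "span T = span S" "triangular T lev"
    using triangular_spanning_set_exists[OF order_refl assms] flag_d by auto
  then show ?thesis by (intro exI[of _ T]) (simp add: independent_triangular card_triangular_le)
qed

end

context tensor_basis_module_over_valuation_ring
begin

lemma flag_Suc_countably_generated_over_flag:
  assumes FR: "finite_rank TYPE('r)" and "k < d"
  shows "\<exists>Y. countable Y \<and> Y \<subseteq> flag (Suc k) \<and> (\<forall>m\<in>flag (Suc k). \<exists>y\<in>Y. \<exists>a. m - a *s y \<in> flag k)"
proof -
  let ?J = "(\<lambda>m. coord m k) ` flag (Suc k) - {0}"
  obtain C where C: "countable C" "coinitial C ?J"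
    using countable_coinitial[OF valuation_ring FR, of ?J] by blast
  define lift where "lift c = (SOME m. m \<in> flag (Suc k) \<and> coord m k = c)" for c
  have lift: "lift c \<in> flag (Suc k) \<and> coord (lift c) k = c" if "c \<in> C" for c
  proof -
    have "\<exists>m. m \<in> flag (Suc k) \<and> coord m k = c" using that C(2) unfolding coinitial_def by blast
    then show ?thesis unfolding lift_def by (rule someI_ex)
  qed
  define Y where "Y = insert 0 (lift ` C)"
  have "\<exists>y\<in>Y. \<exists>a. m - a *s y \<in> flag k" if m: "m \<in> flag (Suc k)" for m
  proof (cases "coord m k = 0")
    case True
    then have "m - 0 *s 0 \<in> flag k" using flag_SucD[OF m] by simp
    then show ?thesis unfolding Y_def by blast
  next
    case False
    then have "coord m k \<in> ?J" using m by blast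
    then obtain c where c: "c \<in> C" "integral_fract (coord m k / c)" and "c \<noteq> 0"
      using C(2) unfolding coinitial_def by blast
    then obtain a where a: "coord m k / c = Fract a 1" unfolding integral_fract_def by blast
    have "m - a *s lift c \<in> flag (Suc k)"
      using subspace_diff[OF subspace_flag m subspace_scale[OF subspace_flag]] lift[OF c(1)] by blast
    moreover have "coord (m - a *s lift c) k = 0"
      using a lift[OF c(1)] \<open>c \<noteq> 0\<close> assms(2) by (simp add: coord_diff coord_scale divide_eq_eq)
    ultimately have "m - a *s lift c \<in> flag k" by (rule flag_SucD)
    then show ?thesis unfolding Y_def using c(1) by blast
  qed
  moreover have "Y \<subseteq> flag (Suc k)" using lift subspace_0[OF subspace_flag] unfolding Y_def by blast
  moreover have "countable Y" unfolding Y_def using C(1) by simp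
  ultimately show ?thesis by blast
qed

lemma countable_spanning_set_exists:
  assumes FR: "finite_rank TYPE('r)"
  shows "\<exists>S. countable S \<and> span S = UNIV"
proof -
  have "\<forall>k\<in>{..<d}. \<exists>Y.
      countable Y \<and> Y \<subseteq> flag (Suc k) \<and> (\<forall>m\<in>flag (Suc k). \<exists>y\<in>Y. \<exists>a. m - a *s y \<in> flag k)"
    using flag_Suc_countably_generated_over_flag[OF FR] by simp
  from bchoice[OF this] obtain Y where Y: "\<forall>k\<in>{..<d}.
      countable (Y k) \<and> Y k \<subseteq> flag (Suc k) \<and> (\<forall>m\<in>flag (Suc k). \<exists>y\<in>Y k. \<exists>a. m - a *s y \<in> flag k)"
    ..
  define S where "S = (\<Union>k<d. Y k)"
  have "flag k \<subseteq> span S" if "k \<le> d" for k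
    using that
  proof (induction k)
    case 0
    then show ?case by (simp add: flag_0 span_zero)
  next
    case (Suc k)
    show ?case
    proof
      fix m assume "m \<in> flag (Suc k)"
      moreover have "k \<in> {..<d}" using Suc.prems by simp
      ultimately obtain y a where "y \<in> Y k" "m - a *s y \<in> flag k" using Y by blast
      then have "y \<in> S" "m - a *s y \<in> span S" using Suc \<open>k \<in> {..<d}\<close> unfolding S_def by auto
      then have "(m - a *s y) + a *s y \<in> span S" using span_add span_scale span_base by blast
      then show "m \<in> span S" by simp
    qed
  qed
  then have "span S = UNIV" using flag_d by auto
  moreover have "countable S" unfolding S_def using Y by auto
  ultimately show ?thesis by blast
qed

lemma free_module_chain_exhausting_exists:
  assumes FR: "finite_rank TYPE('r)"
  shows "\<exists>T G. free_module_chain scale T G \<and> (\<forall>n. card (T n) \<le> d) \<and> (\<forall>m. \<exists>n. m \<in> span (T n))"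
proof -
  obtain S where "countable S" "span S = UNIV" using countable_spanning_set_exists[OF FR] by blast
  define g where "g = from_nat_into S"
  have "span (range g) = UNIV"
    using span_mono[OF subset_range_from_nat_into[OF \<open>countable S\<close>]] \<open>span S = UNIV\<close> unfolding g_def by auto
  have "\<forall>n. \<exists>T. finite T \<and> independent T \<and> card T \<le> d \<and> span T = span (g ` {..<n})"
    using finite_span_has_small_basis by blast
  then obtain T where T: "\<And>n. finite (T n)" "\<And>n. independent (T n)" "\<And>n. card (T n) \<le> d"
    "\<And>n. span (T n) = span (g ` {..<n})" by metis
  have "\<exists>h. bij_betw h {..<card (T n)} (T n)" for n
    using ex_bij_betw_nat_finite[OF T(1)] by (simp add: lessThan_atLeast0)
  then obtain G where G: "\<And>n. bij_betw (G n) {..<card (T n)} (T n)" by metis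
  have "T i \<subseteq> span (T j)" if "i \<le> j" for i j
  proof -
    have "span (g ` {..<i}) \<subseteq> span (g ` {..<j})" using that by (intro span_mono image_mono) auto
    then show ?thesis using span_superset[of "T i"] T(4) by auto
  qed
  then have "free_module_chain scale T G"
    using T G by unfold_locales auto
  moreover have "\<forall>m. \<exists>n. m \<in> span (T n)"
    using in_span_range_imp_in_span_prefix \<open>span (range g) = UNIV\<close> T(4) by auto
  ultimately show ?thesis using T(3) by blast
qed

end

theorem lemma3p10:
  fixes scale :: "'r::idom \<Rightarrow> 'm::ab_group_add \<Rightarrow> 'm"
    and p :: nat and B :: "'m set"
  assumes "prime p"
    and "valuation_ring TYPE('r)"
    and "finite_rank TYPE('r)"
    and "module scale"
    and "torsionfree scale"
    and "tensor_basis scale B"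
  shows "free_countable_filtered_colimit scale p (card B)"
proof -
  interpret tensor_basis_module_over_valuation_ring scale B
    using assms(2,4-6)
    by (intro tensor_basis_module_over_valuation_ring.intro tensor_basis_module.intro
        tensor_basis_module_axioms.intro tensor_basis_module_over_valuation_ring_axioms.intro)
  obtain T G where "free_module_chain scale T G" "\<forall>n. card (T n) \<le> card B" "\<forall>m. \<exists>n. m \<in> span (T n)"
    using free_module_chain_exhausting_exists[OF assms(3)] by blast
  then show ?thesis using free_module_chain.free_countable_filtered_colimit by blast
qed

end
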